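(* Let $h>0$ and let $\Sigma=X(\mathbb R^2)$, $X(u,v)=(e^{vJ}\alpha(u),\phi(u),hv)$, be a helicoidal surface of pitch $h$, oriented by $\eta$. Then $\Sigma$ is a rotator to MCF in $\mathbb H^2\times\mathbb R$ if and only if its mean curvature satisfies $$H(X(u,v))=\frac{\rho\,\tau}{\phi}=\frac{h\,\tau(u)}{\sqrt{\tau(u)^2+h^2(1+\mu(u)^2)}}\quad\text{for all }(u,v)\in\mathbb R^2.$$
   Context: Let $\mathbb L^3=(\mathbb R^3,\langle\cdot,\cdot\rangle)$ with $\langle\cdot,\cdot\rangle=dx_1^2+dx_2^2-dx_3^2$, and let $\mathbb H^2=\{p\in\mathbb L^3:\langle p,p\rangle=-1,\ x_3(p)>0\}$ (hyperboloid model) with the induced metric. The space $\mathbb H^2\times\mathbb R\subset\mathbb L^3\times\mathbb R$ carries the product metric $\langle\cdot,\cdot\rangle_{\mathbb H^2}+dt^2$. Identify $\mathbb R^2$ with $\{x_3=0\}\subset\mathbb L^3$ and let $J(x_1,x_2)=(-x_2,x_1)$; $e^{vJ}$ is the Euclidean rotation of $\mathbb R^2$ by angle $v$. For a regular curve $\alpha:\mathbb R\to\mathbb R^2$ parametrized by Euclidean arc length, set $T=\alpha'$, $N=JT$, $\tau=\langle\alpha,T\rangle$, $\mu=\langle\alpha,N\rangle$ (Euclidean inner products), and $\phi=\sqrt{1+|\alpha|^2}$, so that $\sigma=(\alpha,\phi)$ is a curve in $\mathbb H^2$. The surface is oriented by the unit normal $\eta=\rho\,(e^{vJ}(aT+bN),\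 \mu,\ c)$ (components: the $\mathbb R^2$-part, the $x_3$-part, and the $\mathbb R$-factor part in $\mathbb L^3\times\mathbb R$), where, evaluated at $u$, $a=\mu\phi'$, $b=(1+\mu^2)/\phi$, $c=-\phi'/h$ and $\rho=(a^2+b^2-\mu^2+c^2)^{-1/2}$. The mean curvature $H$ is taken with respect to $\eta$ (half the trace of the second fundamental form $\langle\bar\nabla_{\cdot}\cdot,\eta\rangle$). Let $\xi(x_1,x_2,x_3,t)=(-x_2,x_1,0,0)$ be the Killing field generated by the rotations $\mathrm{diag}(e^{tJ},1,1)$ about the axis $\{(0,0,1)\}\times\mathbb R$. The surface is a rotator to MCF if $H=\langle\xi,\eta\rangle$ everywhere on it. *)

theory Defs
  imports "HOL-Analysis.Analysis"
begin

text \<open>R^2 is modelled by complex numbers (x1 + i x2); then J = multiplication by i,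
  e^{vJ} = multiplication by cis v, and the Euclidean inner product is (\<bullet>).
  Points of L^3 x R are triples (z, x3, t) :: complex \<times> real \<times> real.\<close>

primrec vderiv_n :: "(real \<Rightarrow> 'a::real_normed_vector) \<Rightarrow> nat \<Rightarrow> real \<Rightarrow> 'a" where
  "vderiv_n f 0 = f"
| "vderiv_n f (Suc k) = (\<lambda>u. vector_derivative (vderiv_n f k) (at u))"

definition smooth_curve :: "(real \<Rightarrow> complex) \<Rightarrow> bool" where
  "smooth_curve \<alpha> \<longleftrightarrow> (\<forall>k u. vderiv_n \<alpha> k differentiable (at u))"

definition lor :: "complex \<times> real \<times> real \<Rightarrow> complex \<times> real \<times> real \<Rightarrow> real" where
  "lor p q = fst p \<bullet> fst q - fst (snd p) * fst (snd q) + snd (snd p) * snd (snd q)"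

definition Tc :: "(real \<Rightarrow> complex) \<Rightarrow> real \<Rightarrow> complex" where
  "Tc \<alpha> u = vector_derivative \<alpha> (at u)"

definition Nc :: "(real \<Rightarrow> complex) \<Rightarrow> real \<Rightarrow> complex" where
  "Nc \<alpha> u = \<i> * Tc \<alpha> u"

definition tau :: "(real \<Rightarrow> complex) \<Rightarrow> real \<Rightarrow> real" where
  "tau \<alpha> u = \<alpha> u \<bullet> Tc \<alpha> u"

definition mu :: "(real \<Rightarrow> complex) \<Rightarrow> real \<Rightarrow> real" where
  "mu \<alpha> u = \<alpha> u \<bullet> Nc \<alpha> u"

definition phi :: "(real \<Rightarrow> complex) \<Rightarrow> real \<Rightarrow> real" where
  "phi \<alpha> u = sqrt (1 + (cmod (\<alpha> u))\<^sup>2)"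

definition phi' :: "(real \<Rightarrow> complex) \<Rightarrow> real \<Rightarrow> real" where
  "phi' \<alpha> u = vector_derivative (phi \<alpha>) (at u)"

definition coef_a :: "(real \<Rightarrow> complex) \<Rightarrow> real \<Rightarrow> real" where
  "coef_a \<alpha> u = mu \<alpha> u * phi' \<alpha> u"

definition coef_b :: "(real \<Rightarrow> complex) \<Rightarrow> real \<Rightarrow> real" where
  "coef_b \<alpha> u = (1 + (mu \<alpha> u)\<^sup>2) / phi \<alpha> u"

definition coef_c :: "(real \<Rightarrow> complex) \<Rightarrow> real \<Rightarrow> real \<Rightarrow> real" where
  "coef_c \<alpha> h u = - phi' \<alpha> u / h"

definition rho :: "(real \<Rightarrow> complex) \<Rightarrow> real \<Rightarrow> real \<Rightarrow> real" where
  "rho \<alpha> h u = 1 / sqrt ((coef_a \<alpha> u)\<^sup>2 + (coef_b \<alpha> u)\<^sup>2 - (mu \<alpha> u)\<^sup>2 + (coef_c \<alpha> h u)\<^sup>2)"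

definition helX :: "(real \<Rightarrow> complex) \<Rightarrow> real \<Rightarrow> real \<Rightarrow> real \<Rightarrow> complex \<times> real \<times> real" where
  "helX \<alpha> h u v = (cis v * \<alpha> u, phi \<alpha> u, h * v)"

definition eta :: "(real \<Rightarrow> complex) \<Rightarrow> real \<Rightarrow> real \<Rightarrow> real \<Rightarrow> complex \<times> real \<times> real" where
  "eta \<alpha> h u v = (complex_of_real (rho \<alpha> h u) * (cis v * (complex_of_real (coef_a \<alpha> u) * Tc \<alpha> u
                     + complex_of_real (coef_b \<alpha> u) * Nc \<alpha> u)),
                   rho \<alpha> h u * mu \<alpha> u, rho \<alpha> h u * coef_c \<alpha> h u)"

definition xi :: "complex \<times> real \<times> real \<Rightarrow> complex \<times> real \<times> real" where
  "xi p = (\<i> * fst p, 0, 0)"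

definition pd_u :: "(real \<Rightarrow> real \<Rightarrow> 'a::real_normed_vector) \<Rightarrow> real \<Rightarrow> real \<Rightarrow> 'a" where
  "pd_u Y u v = vector_derivative (\<lambda>s. Y s v) (at u)"

definition pd_v :: "(real \<Rightarrow> real \<Rightarrow> 'a::real_normed_vector) \<Rightarrow> real \<Rightarrow> real \<Rightarrow> 'a" where
  "pd_v Y u v = vector_derivative (\<lambda>s. Y u s) (at v)"

text \<open>Mean curvature of the parametrised surface Y in H^2 x R (a hypersurface of
  the flat space L^3 x R) w.r.t. a normal field Nf tangent to
  H^2 x R: the ambient Levi-Civita connection is the tangential projection of the flat one,
  so the second fundamental form is <Y_ij, Nf> computed with the flat Lorentzian product.\<close>
definition mean_curv :: "(real \<Rightarrow> real \<Rightarrow> complex \<times> real \<times> real)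
    \<Rightarrow> (real \<Rightarrow> real \<Rightarrow> complex \<times> real \<times> real) \<Rightarrow> real \<Rightarrow> real \<Rightarrow> real" where
  "mean_curv Y Nf u v =
     (let E = lor (pd_u Y u v) (pd_u Y u v);
          F = lor (pd_u Y u v) (pd_v Y u v);
          G = lor (pd_v Y u v) (pd_v Y u v);
          e = lor (pd_u (pd_u Y) u v) (Nf u v);
          f = lor (pd_v (pd_u Y) u v) (Nf u v);
          g = lor (pd_v (pd_v Y) u v) (Nf u v)
      in (E * g - 2 * F * f + G * e) / (2 * (E * G - F\<^sup>2)))"

definition is_rotator :: "(real \<Rightarrow> complex) \<Rightarrow> real \<Rightarrow> bool" where
  "is_rotator \<alpha> h \<longleftrightarrow>
     (\<forall>u v. mean_curv (helX \<alpha> h) (eta \<alpha> h) u v = lor (xi (helX \<alpha> h u v)) (eta \<alpha> h u v))"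

end

theory Submission imports Defs begin

text \<open>The Killing field is rotation-invariant, so \<open>\<langle>\<xi>, \<eta>\<rangle>\<close> reduces to \<open>\<rho> (b \<tau> - a \<mu>)\<close>,
  and \<open>\<phi>' = \<tau>/\<phi>\<close> (from \<open>\<phi>\<^sup>2 = 1 + |\<alpha>|\<^sup>2\<close>) turns this into \<open>\<rho> \<tau> / \<phi>\<close>. Hence the rotator equation
  \<open>H = \<langle>\<xi>, \<eta>\<rangle>\<close> is exactly \<open>H = \<rho> \<tau> / \<phi>\<close>. Finally \<open>|\<alpha>|\<^sup>2 = \<tau>\<^sup>2 + \<mu>\<^sup>2\<close> collapses the
  expression under the root in \<open>\<rho>\<close> to \<open>(\<tau>\<^sup>2 + h\<^sup>2 (1 + \<mu>\<^sup>2)) / (h \<phi>)\<^sup>2\<close>.\<close>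

lemma inner_mult_cis:
  "(cis v * z) \<bullet> (cis v * w) = z \<bullet> w"
  by (simp add: inner_complex_def cis.ctr algebra_simps) (use sin_cos_squared_add3[of v] in algebra)

lemma cmod_power2_eq_inner_unit:
  assumes "norm w = 1"
  shows "(cmod z)\<^sup>2 = (z \<bullet> w)\<^sup>2 + (z \<bullet> (\<i> * w))\<^sup>2"
proof -
  have "(Re w)\<^sup>2 + (Im w)\<^sup>2 = 1"
    using assms by (simp add: cmod_def)
  then show ?thesis
    by (simp add: inner_complex_def cmod_def) algebra
qed

lemma phi_pos: "phi \<alpha> u > 0"
  unfolding phi_def by (simp add: add_pos_nonneg)

lemma phi'_eq_tau_div_phi:
  assumes "\<alpha> differentiable at u"
  shows "phi' \<alpha> u = tau \<alpha> u / phi \<alpha> u"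
proof -
  have "(\<alpha> has_vector_derivative Tc \<alpha> u) (at u)"
    using assms vector_derivative_works Tc_def by metis
  then have "((\<lambda>s. \<alpha> s \<bullet> \<alpha> s) has_derivative
      (\<lambda>t. \<alpha> u \<bullet> (t *\<^sub>R Tc \<alpha> u) + (t *\<^sub>R Tc \<alpha> u) \<bullet> \<alpha> u)) (at u)"
    unfolding has_vector_derivative_def by (intro has_derivative_inner) auto
  then have d: "((\<lambda>s. 1 + \<alpha> s \<bullet> \<alpha> s) has_real_derivative 2 * tau \<alpha> u) (at u)"
    using has_derivative_add[OF has_derivative_const[of 1]]
    unfolding has_field_derivative_def tau_def
    by (simp add: inner_commute algebra_simps mult_commute_abs)
  have "((\<lambda>s. sqrt (1 + \<alpha> s \<bullet> \<alpha> s)) has_real_derivative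
      inverse (sqrt (1 + \<alpha> u \<bullet> \<alpha> u)) / 2 * (2 * tau \<alpha> u)) (at u)"
    by (rule DERIV_chain2[OF DERIV_real_sqrt d]) (simp add: add_pos_nonneg)
  moreover have "phi \<alpha> = (\<lambda>s. sqrt (1 + \<alpha> s \<bullet> \<alpha> s))"
    unfolding phi_def by (simp add: power2_norm_eq_inner)
  ultimately have "(phi \<alpha> has_vector_derivative tau \<alpha> u / phi \<alpha> u) (at u)"
    unfolding has_real_derivative_iff_has_vector_derivative by (simp add: field_simps)
  then show ?thesis
    unfolding phi'_def by (rule vector_derivative_at)
qed

lemma lor_xi_eta:
  assumes "\<alpha> differentiable at u"
  shows "lor (xi (helX \<alpha> h u v)) (eta \<alpha> h u v) = rho \<alpha> h u * tau \<alpha> u / phi \<alpha> u"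
proof -
  have "(\<i> * \<alpha> u) \<bullet> Tc \<alpha> u = - mu \<alpha> u" and "(\<i> * \<alpha> u) \<bullet> Nc \<alpha> u = tau \<alpha> u"
    unfolding mu_def tau_def Nc_def by (simp_all add: inner_complex_def)
  then have "lor (xi (helX \<alpha> h u v)) (eta \<alpha> h u v)
      = rho \<alpha> h u * (coef_b \<alpha> u * tau \<alpha> u - coef_a \<alpha> u * mu \<alpha> u)"
    unfolding lor_def xi_def helX_def eta_def
    by (simp add: mult.left_commute[of _ "cis v"] scaleR_conv_of_real[symmetric]
        inner_mult_cis inner_add_right)
  also have "\<dots> = rho \<alpha> h u * tau \<alpha> u / phi \<alpha> u"
    unfolding coef_a_def coef_b_def phi'_eq_tau_div_phi[OF assms]
    using phi_pos[of \<alpha> u] by (simp add: field_simps power2_eq_square)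
  finally show ?thesis .
qed

lemma rho_eq:
  assumes "norm (Tc \<alpha> u) = 1" and "h > 0" and "\<alpha> differentiable at u"
  shows "rho \<alpha> h u = h * phi \<alpha> u / sqrt ((tau \<alpha> u)\<^sup>2 + h\<^sup>2 * (1 + (mu \<alpha> u)\<^sup>2))"
proof -
  define t m p K where "t = tau \<alpha> u" "m = mu \<alpha> u" "p = phi \<alpha> u"
    "K = t\<^sup>2 + h\<^sup>2 * (1 + m\<^sup>2)"
  have p2: "p\<^sup>2 = 1 + t\<^sup>2 + m\<^sup>2"
    using cmod_power2_eq_inner_unit[OF assms(1), of "\<alpha> u"] phi_pos[of \<alpha> u]
    unfolding t_m_p_K_def phi_def tau_def mu_def Nc_def by simp
  have "p > 0" and "K > 0"
    using phi_pos[of \<alpha> u] assms(2)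
    unfolding t_m_p_K_def by (auto intro: add_nonneg_pos simp: add_pos_nonneg)
  have "(m * (t/p))\<^sup>2 + ((1 + m\<^sup>2)/p)\<^sup>2 - m\<^sup>2 + (- (t/p)/h)\<^sup>2
      = (m\<^sup>2 * t\<^sup>2 * h\<^sup>2 + (1 + m\<^sup>2)\<^sup>2 * h\<^sup>2 - m\<^sup>2 * p\<^sup>2 * h\<^sup>2 + t\<^sup>2) / (h * p)\<^sup>2"
    using \<open>p > 0\<close> assms(2) by (simp add: field_simps)
  also have "\<dots> = K / (h * p)\<^sup>2"
    unfolding t_m_p_K_def(4) p2 by algebra
  finally have "rho \<alpha> h u = 1 / sqrt (K / (h * p)\<^sup>2)"
    unfolding rho_def coef_a_def coef_b_def coef_c_def phi'_eq_tau_div_phi[OF assms(3)]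
      t_m_p_K_def[symmetric] by simp
  then show ?thesis
    using \<open>p > 0\<close> \<open>K > 0\<close> assms(2)
    unfolding t_m_p_K_def[symmetric] by (simp add: real_sqrt_divide real_sqrt_mult)
qed

theorem lemma2p3:
  fixes \<alpha> :: "real \<Rightarrow> complex" and h :: real
  assumes "h > 0"
    and "smooth_curve \<alpha>"
    and "\<forall>u. norm (Tc \<alpha> u) = 1"
  shows "is_rotator \<alpha> h \<longleftrightarrow>
           (\<forall>u v. mean_curv (helX \<alpha> h) (eta \<alpha> h) u v = rho \<alpha> h u * tau \<alpha> u / phi \<alpha> u
                 \<and> rho \<alpha> h u * tau \<alpha> u / phi \<alpha> u
                     = h * tau \<alpha> u / sqrt ((tau \<alpha> u)\<^sup>2 + h\<^sup>2 * (1 + (mu \<alpha> u)\<^sup>2)))"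
proof -
  have diff: "\<alpha> differentiable at u" for u
    using assms(2) unfolding smooth_curve_def by (metis vderiv_n.simps(1))
  have "rho \<alpha> h u * tau \<alpha> u / phi \<alpha> u
      = h * tau \<alpha> u / sqrt ((tau \<alpha> u)\<^sup>2 + h\<^sup>2 * (1 + (mu \<alpha> u)\<^sup>2))" for u
    using rho_eq[OF spec[OF assms(3)] assms(1) diff] phi_pos[of \<alpha> u] by simp
  then show ?thesis
    unfolding is_rotator_def lor_xi_eta[OF diff] by auto
qed

end
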